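(* Let $s\ge 2$ be an even constant and $\epsilon$ a constant with $0<\epsilon<1/(2s-1)$. The $(1+1)$~IA$^{hyp}$ finds an optimal solution of any instance of the class $G^*_\epsilon$ (with $n$ even) in $O(n^2)$ expected fitness function evaluations.
   Context: Partition problem: an instance consists of $n$ jobs with positive processing times $p_1,\dots,p_n$. A solution is $x\in\{0,1\}^n$ (job $i$ on machine $M_1$ if $x_i=0$, on $M_2$ if $x_i=1$), with makespan $f(x)=\max\{\sum_i p_ix_i,\sum_i p_i(1-x_i)\}$ to be minimised. The class $G^*_\epsilon$: instances with an even number $n$ of jobs, an even number $s=\Theta(1)$ of large jobs, and processing times $p_i=\frac{1}{2s-1}-\frac{\epsilon}{2s}$ for $i\le s$ and $p_i=\frac{s-1}{n-s}\left(\frac{1}{2s-1}+\frac{\epsilon}{2(s-1)}\right)$ for $s<i\le n$, where $0<\epsilon<1/(2s-1)$ is an arbitrarily small constant. The $(1+1)$~IA$^{hyp}$ (minimisation): initialise $x$ uniformly at random and evaluate it. In each iteration: $y:=x$, $F:=\{1,\dots,n\}$; while $F\ne\emptyset$ and $f(y)\ge f(x)$: pick $i\in F$ uniformly at random, remove it from $F$, flip $y_i$, evaluate $f(y)$. Then if $f(y)\le f(x)$ set $x:=y$. Asymptotics are as $n\to\infty$. *)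

theory Defs
  imports "HOL-Probability.Probability"
begin

text \<open>Jobs are indexed 0..n-1 (paper: 1..n). A solution is a bool list of length n;
  entry True means the job is on machine M2, False means M1.\<close>

definition makespan :: "(nat \<Rightarrow> real) \<Rightarrow> bool list \<Rightarrow> real" where
  "makespan p x = max (\<Sum>i<length x. if x ! i then p i else 0)
                      (\<Sum>i<length x. if x ! i then 0 else p i)"

definition flip :: "bool list \<Rightarrow> nat \<Rightarrow> bool list" where
  "flip y i = y[i := \<not> y ! i]"

text \<open>Inner hypermutation loop: current parent x, mutant y, set F of not yet flipped
  positions. Returns the final mutant and the number of fitness evaluations performed.\<close>
function hyp_loop :: "(bool list \<Rightarrow> real) \<Rightarrow> bool list \<Rightarrow> bool list \<Rightarrow> nat set
    \<Rightarrow> (bool list \<times> nat) pmf" where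
  "hyp_loop f x y F =
     (if F = {} \<or> \<not> finite F \<or> f y < f x then return_pmf (y, 0)
      else bind_pmf (pmf_of_set F)
        (\<lambda>i. map_pmf (\<lambda>(z, k). (z, Suc k)) (hyp_loop f x (flip y i) (F - {i}))))"
  by auto
termination
  by (relation "Wellfounded.measure (\<lambda>(f, x, y, F). card F)")
     (auto simp: set_pmf_of_set card_gt_0_iff)

definition ia_step :: "(bool list \<Rightarrow> real) \<Rightarrow> bool list \<Rightarrow> (bool list \<times> nat) pmf" where
  "ia_step f x = map_pmf (\<lambda>(y, k). (if f y \<le> f x then y else x, k))
                         (hyp_loop f x x {0..<length x})"

definition opt_value :: "(bool list \<Rightarrow> real) \<Rightarrow> nat \<Rightarrow> real" where
  "opt_value f n = Min (f ` {x. length x = n})"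

text \<open>Expected number of further fitness evaluations, starting from parent x, until the
  parent is an optimal solution: the least fixed point of the Bellman equation
  (the standard characterisation of expected hitting costs of a Markov chain).\<close>
definition remaining_evals :: "(bool list \<Rightarrow> real) \<Rightarrow> nat \<Rightarrow> bool list \<Rightarrow> ennreal" where
  "remaining_evals f n = lfp (\<lambda>T x. if f x = opt_value f n then 0
        else \<integral>\<^sup>+ yk. (of_nat (snd yk) + T (fst yk)) \<partial>measure_pmf (ia_step f x))"

text \<open>Expected number of fitness evaluations (including the initial one) until an optimal
  solution is found, starting from a uniformly random initial solution.\<close>
definition expected_runtime :: "(nat \<Rightarrow> real) \<Rightarrow> nat \<Rightarrow> ennreal" where
  "expected_runtime p n = 1 + (\<integral>\<^sup>+ x. remaining_evals (makespan p) n x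
        \<partial>measure_pmf (pmf_of_set {x. length x = n}))"

text \<open>The instance of class G*_eps with n jobs and s large jobs (0-indexed: i < s large).\<close>
definition G_star :: "nat \<Rightarrow> real \<Rightarrow> nat \<Rightarrow> nat \<Rightarrow> real" where
  "G_star s eps n i = (if i < s then 1 / (2 * real s - 1) - eps / (2 * real s)
     else (real s - 1) / (real n - real s) * (1 / (2 * real s - 1) + eps / (2 * (real s - 1))))"

end

theory Submission
  imports Defs
begin

text \<open>
  An iteration of the hypermutation operator flips the positions in a uniformly random order and
  stops at the first improvement. Hence, for every \<open>t\<close>, it finds an improvement at least with
  the probability that flipping a uniformly random \<open>t\<close>-subset of the positions improves.

  Let \<open>D\<close> be the difference of the two machine loads and \<open>B\<close> the processing time of a small
  job. If \<open>D > B\<close>, then either \<open>\<Omega>(n)\<close> small jobs lie on the fuller machine and moving one of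
  them improves, or all \<open>s\<close> large jobs lie on the fuller machine and moving one of them together
  with a suitable constant fraction of the small jobs improves; both happen with probability
  \<open>\<Omega>(1)\<close>. If \<open>0 < D \<le> B\<close>, then moving half of each of the four classes of jobs (large or
  small, on the fuller or the emptier machine) balances the machines exactly, and such subsets
  make up a fraction \<open>\<Omega>(1 / n)\<close> of all subsets of their size. There are \<open>O(n)\<close> fitness
  levels, only \<open>O(1)\<close> of them with \<open>D \<le> B\<close>, and an iteration costs at most \<open>n\<close> evaluations,
  so the fitness-level method gives \<open>O(n\<^sup>2)\<close>.
\<close>

section \<open>Hypermutation\<close>

declare hyp_loop.simps [simp del]

definition flips :: "bool list \<Rightarrow> nat set \<Rightarrow> bool list" where
  "flips y Q = map (\<lambda>j. if j \<in> Q then \<not> y ! j else y ! j) [0..<length y]"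

lemma length_flips [simp]: "length (flips y Q) = length y"
  by (simp add: flips_def)

lemma flips_empty [simp]: "flips y {} = y"
  by (rule nth_equalityI) (auto simp: flips_def)

lemma flips_flip: "i < length y \<Longrightarrow> i \<notin> Q \<Longrightarrow> flips (flip y i) Q = flips y (insert i Q)"
  by (rule nth_equalityI) (auto simp: flips_def flip_def nth_list_update)

lemma set_pmf_hyp_loop:
  assumes "finite F" "(z, k) \<in> set_pmf (hyp_loop f x y F)"
  shows "length z = length y \<and> k \<le> card F"
  using assms
proof (induction f x y F arbitrary: z k rule: hyp_loop.induct)
  case (1 f x y F)
  show ?case
  proof (cases "F = {} \<or> f y < f x")
    case True
    with "1.prems" show ?thesis by (subst (asm) hyp_loop.simps) auto
  next
    case False
    with "1.prems" obtain i k' where i: "i \<in> F" and k: "k = Suc k'"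
      and zk: "(z, k') \<in> set_pmf (hyp_loop f x (flip y i) (F - {i}))"
      by (subst (asm) hyp_loop.simps) (auto simp: set_pmf_of_set)
    with "1.IH"[of i z k'] False "1.prems"(1)
    have "length z = length (flip y i)" "k' \<le> card (F - {i})"
      by (auto simp: set_pmf_of_set)
    moreover have "card (F - {i}) < card F"
      using i "1.prems"(1) by (meson card_Diff1_less)
    ultimately show ?thesis using k by (simp add: flip_def)
  qed
qed

lemma measure_bind_pmf_of_set:
  assumes "finite F" "F \<noteq> {}"
  shows "measure (bind_pmf (pmf_of_set F) N) X = (\<Sum>i\<in>F. measure (N i) X) / card F"
proof -
  have "ennreal (measure (bind_pmf (pmf_of_set F) N) X)
      = (\<Sum>i\<in>F. ennreal (measure (N i) X)) / card F"
    using assms by (simp add: measure_pmf.emeasure_eq_measure[symmetric] nn_integral_pmf_of_set)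
  also have "\<dots> = ennreal ((\<Sum>i\<in>F. measure (N i) X) / card F)"
    using assms
    by (simp add: sum_ennreal ennreal_of_nat_eq_real_of_nat divide_ennreal card_gt_0_iff sum_nonneg)
  finally show ?thesis by (simp add: divide_nonneg_nonneg sum_nonneg)
qed

lemma sum_card_subsets_insert:
  assumes "finite F"
  shows "(\<Sum>i\<in>F. card {Q. Q \<subseteq> F - {i} \<and> card Q = t \<and> P (insert i Q)})
         = Suc t * card {Q. Q \<subseteq> F \<and> card Q = Suc t \<and> P Q}"
proof -
  define \<Q> where "\<Q> = {Q. Q \<subseteq> F \<and> card Q = Suc t \<and> P Q}"
  have fin_subsets: "finite Q" if "Q \<subseteq> F" for Q
    using assms that by (auto intro: finite_subset)
  have fin_\<Q>: "finite \<Q>"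
    unfolding \<Q>_def using assms by (auto intro: finite_subset[of _ "Pow F"])
  have "bij_betw (insert i) {Q. Q \<subseteq> F - {i} \<and> card Q = t \<and> P (insert i Q)} {Q \<in> \<Q>. i \<in> Q}"
    if "i \<in> F" for i
    by (rule bij_betw_byWitness[of _ "\<lambda>Q. Q - {i}"])
       (use that fin_subsets in \<open>auto simp: \<Q>_def insert_absorb card_insert_if subset_Diff_insert\<close>)
  then have "(\<Sum>i\<in>F. card {Q. Q \<subseteq> F - {i} \<and> card Q = t \<and> P (insert i Q)})
      = (\<Sum>i\<in>F. card {Q \<in> \<Q>. i \<in> Q})"
    by (intro sum.cong refl bij_betw_same_card) auto
  also have "\<dots> = (\<Sum>i\<in>F. \<Sum>Q\<in>\<Q>. if i \<in> Q then 1 else 0)"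
    using fin_\<Q> by (simp add: sum.If_cases Int_def)
  also have "\<dots> = (\<Sum>Q\<in>\<Q>. \<Sum>i\<in>F. if i \<in> Q then 1 else 0)"
    by (rule sum.swap)
  also have "\<dots> = (\<Sum>Q\<in>\<Q>. Suc t)"
    using assms by (intro sum.cong refl) (auto simp: \<Q>_def sum.If_cases Int_absorb1)
  finally show ?thesis by (simp add: \<Q>_def)
qed

definition improving_subsets ::
    "(bool list \<Rightarrow> real) \<Rightarrow> bool list \<Rightarrow> bool list \<Rightarrow> nat set \<Rightarrow> nat \<Rightarrow> nat set set"
  where "improving_subsets f x y F t = {Q. Q \<subseteq> F \<and> card Q = t \<and> f (flips y Q) < f x}"

lemma card_improving_subsets_le:
  "finite F \<Longrightarrow> card (improving_subsets f x y F t) \<le> card F choose t"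
  unfolding improving_subsets_def n_subsets[symmetric] by (intro card_mono) auto

lemma sum_card_improving_subsets_flip:
  assumes "finite F" "F \<subseteq> {..<length y}"
  shows "(\<Sum>i\<in>F. card (improving_subsets f x (flip y i) (F - {i}) t))
    = Suc t * card (improving_subsets f x y F (Suc t))"
proof -
  have "improving_subsets f x (flip y i) (F - {i}) t
      = {Q. Q \<subseteq> F - {i} \<and> card Q = t \<and> f (flips y (insert i Q)) < f x}" if "i \<in> F" for i
    using that assms(2) flips_flip[of i y] unfolding improving_subsets_def
    by (metis (lifting) Diff_iff insertI1 lessThan_iff subsetD subset_Diff_insert)
  then have "(\<Sum>i\<in>F. card (improving_subsets f x (flip y i) (F - {i}) t))
      = (\<Sum>i\<in>F. card {Q. Q \<subseteq> F - {i} \<and> card Q = t \<and> f (flips y (insert i Q)) < f x})"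
    by (intro sum.cong) simp_all
  also have "\<dots> = Suc t * card (improving_subsets f x y F (Suc t))"
    unfolding improving_subsets_def by (rule sum_card_subsets_insert[OF assms(1)])
  finally show ?thesis .
qed

lemma binomial_ratio_Suc:
  assumes "0 < N"
  shows "real (Suc t * G) / real ((N - 1) choose t) / real N = real G / real (N choose Suc t)"
proof -
  have "N * ((N - 1) choose t) = Suc t * (N choose Suc t)"
    using Suc_times_binomial[of t "N - 1"] assms by simp
  then have "real N * real ((N - 1) choose t) = real (Suc t) * real (N choose Suc t)"
    by (metis of_nat_mult)
  then have "real (Suc t * G) / real ((N - 1) choose t) / real N
      = (real (Suc t) * real G) / (real (Suc t) * real (N choose Suc t))"
    by (simp only: divide_divide_eq_left of_nat_mult mult.commute[of "real ((N - 1) choose t)"])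
  then show ?thesis by simp
qed

text \<open>The first \<open>t\<close> positions flipped by the loop form a uniformly random \<open>t\<close>-subset of \<open>F\<close>,
  and the loop stops before flipping all of them only after an improvement.\<close>
lemma prob_hyp_loop_improves_ge:
  assumes "finite F" "t \<le> card F" "F \<subseteq> {..<length y}"
  shows "card (improving_subsets f x y F t) / (card F choose t)
    \<le> measure_pmf.prob (hyp_loop f x y F) {zk. f (fst zk) < f x}"
  using assms
proof (induction t arbitrary: y F)
  case 0
  have "card Q = 0 \<longleftrightarrow> Q = {}" if "Q \<subseteq> F" for Q
    using "0.prems"(1) that finite_subset by fastforce
  then have "improving_subsets f x y F 0 = (if f y < f x then {{}} else {})"
    by (auto simp: improving_subsets_def)
  then show ?case by (simp add: hyp_loop.simps)
next
  case (Suc t)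
  let ?improves = "{zk. f (fst zk) < f x}"
  show ?case
  proof (cases "f y < f x")
    case True
    then show ?thesis
      using card_improving_subsets_le[OF Suc.prems(1)] Suc.prems(2)
      by (simp add: hyp_loop.simps divide_le_eq_1)
  next
    case False
    define N where "N = card F"
    have "F \<noteq> {}" "0 < N"
      using Suc.prems(1,2) by (auto simp: N_def)
    have IH: "card (improving_subsets f x (flip y i) (F - {i}) t) / ((N - 1) choose t)
        \<le> measure_pmf.prob (hyp_loop f x (flip y i) (F - {i})) ?improves" if "i \<in> F" for i
      using Suc.IH[of "F - {i}" "flip y i"] Suc.prems that by (force simp: N_def flip_def)
    have "real (Suc t * card (improving_subsets f x y F (Suc t))) / ((N - 1) choose t) / N
        = (\<Sum>i\<in>F. card (improving_subsets f x (flip y i) (F - {i}) t) / ((N - 1) choose t)) / N"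
      unfolding sum_card_improving_subsets_flip[OF Suc.prems(1,3), symmetric] of_nat_sum
        sum_divide_distrib ..
    also have "\<dots> \<le> (\<Sum>i\<in>F. measure_pmf.prob (hyp_loop f x (flip y i) (F - {i})) ?improves) / N"
      using IH by (intro divide_right_mono sum_mono) auto
    also have "\<dots> = measure_pmf.prob (hyp_loop f x y F) ?improves"
      using False \<open>F \<noteq> {}\<close> Suc.prems(1)
      by (subst (2) hyp_loop.simps)
         (simp add: measure_bind_pmf_of_set N_def vimage_def case_prod_beta)
    finally show ?thesis
      using binomial_ratio_Suc[OF \<open>0 < N\<close>] by (simp add: N_def)
  qed
qed

definition improve_prob :: "(bool list \<Rightarrow> real) \<Rightarrow> bool list \<Rightarrow> real" where
  "improve_prob f x = measure_pmf.prob (ia_step f x) {yk. f (fst yk) < f x}"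

lemma set_pmf_ia_step:
  assumes "(y, k) \<in> set_pmf (ia_step f x)"
  shows "length y = length x \<and> k \<le> length x \<and> f y \<le> f x"
proof -
  obtain y' where y': "(y', k) \<in> set_pmf (hyp_loop f x x {0..<length x})"
    and y: "y = (if f y' \<le> f x then y' else x)"
    using assms by (auto simp: ia_step_def)
  show ?thesis
    using set_pmf_hyp_loop[OF _ y'] y by auto
qed

lemma improve_prob_ge:
  assumes "t \<le> length x"
  shows "card (improving_subsets f x x {..<length x} t) / (length x choose t) \<le> improve_prob f x"
proof -
  let ?improves = "{yk. f (fst yk) < f x}"
  have "(\<lambda>(y, k). (if f y \<le> f x then y else x, k)) -` ?improves = ?improves"
    by (auto split: if_splits)
  then have "improve_prob f x = measure_pmf.prob (hyp_loop f x x {..<length x}) ?improves"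
    unfolding improve_prob_def ia_step_def measure_map_pmf lessThan_atLeast0 by (rule arg_cong)
  then show ?thesis
    using prob_hyp_loop_improves_ge[of "{..<length x}" t x f x] assms by simp
qed

section \<open>The fitness-level method\<close>

lemma nn_integral_le_prob_compl:
  assumes "\<And>z. z \<in> set_pmf M \<Longrightarrow> h z \<le> ennreal (a + b * indicator (- E) z)" "0 \<le> a" "0 \<le> b"
  shows "(\<integral>\<^sup>+z. h z \<partial>M) \<le> ennreal (a + b * (1 - measure_pmf.prob M E))"
proof -
  have "(\<integral>\<^sup>+z. h z \<partial>M) \<le> (\<integral>\<^sup>+z. ennreal (a + b * indicator (- E) z) \<partial>M)"
    using assms(1) by (intro nn_integral_mono_AE) (simp add: AE_measure_pmf_iff)
  also have "\<dots> = ennreal (\<integral>z. a + b * indicator (- E) z \<partial>M)"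
    using assms(2,3)
    by (intro nn_integral_eq_integral measure_pmf.integrable_const_bound[where B = "a + b"])
       (auto simp: indicator_def)
  also have "(\<integral>z. a + b * indicator (- E) z \<partial>M) = a + b * measure_pmf.prob M (- E)"
    by (subst Bochner_Integration.integral_add)
       (auto simp: measure_pmf.emeasure_finite less_top[symmetric])
  also have "\<dots> = a + b * (1 - measure_pmf.prob M E)"
    using measure_pmf.prob_compl[of E M] by (simp add: Compl_eq_Diff_UNIV)
  finally show ?thesis .
qed

definition fitness_levels :: "(bool list \<Rightarrow> real) \<Rightarrow> nat \<Rightarrow> bool list \<Rightarrow> real set" where
  "fitness_levels f n x = {v \<in> f ` {z. length z = n}. opt_value f n < v \<and> v \<le> f x}"

lemma finite_fitness_levels: "finite (fitness_levels f n x)"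
  using finite_lists_length_eq[of "UNIV :: bool set" n] by (simp add: fitness_levels_def)

lemma opt_value_le: "length x = n \<Longrightarrow> opt_value f n \<le> f x"
  unfolding opt_value_def using finite_lists_length_eq[of "UNIV :: bool set" n]
  by (intro Min_le) auto

lemma in_fitness_levels: "length x = n \<Longrightarrow> f x \<noteq> opt_value f n \<Longrightarrow> f x \<in> fitness_levels f n x"
  using opt_value_le[of x n f] by (auto simp: fitness_levels_def)

lemma fitness_levels_less: "f y < f x \<Longrightarrow> fitness_levels f n y \<subseteq> fitness_levels f n x - {f x}"
  by (auto simp: fitness_levels_def)

text \<open>Fitness-level method: the weighted sum over the levels still to be passed is a pre-fixed
  point of the Bellman operator defining \<^const>\<open>remaining_evals\<close>, because an iteration costs at
  most \<open>n\<close> evaluations and leaves the level with probability \<^const>\<open>improve_prob\<close>.\<close>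
lemma remaining_evals_le_fitness_levels:
  assumes w_nonneg: "\<And>v. 0 \<le> w v"
    and level_time: "\<And>x. length x = n \<Longrightarrow> f x \<noteq> opt_value f n
      \<Longrightarrow> real n \<le> w (f x) * improve_prob f x"
    and "length x = n"
  shows "remaining_evals f n x \<le> ennreal (\<Sum>v\<in>fitness_levels f n x. w v)"
proof -
  define W where "W x = (\<Sum>v\<in>fitness_levels f n x. w v)" for x
  define T where "T x = (if length x = n then ennreal (W x) else \<top>)" for x
  have "(\<integral>\<^sup>+ yk. (of_nat (snd yk) + T (fst yk)) \<partial>measure_pmf (ia_step f x)) \<le> T x"
    if x: "length x = n" "f x \<noteq> opt_value f n" for x
  proof -
    define E where "E = {yk :: bool list \<times> nat. f (fst yk) < f x}"
    define W1 where "W1 = (\<Sum>v\<in>fitness_levels f n x - {f x}. w v)"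
    have W_x: "W x = w (f x) + W1"
      unfolding W_def W1_def by (intro sum.remove finite_fitness_levels in_fitness_levels x)
    have "of_nat k + T y \<le> ennreal (real n + W1 + w (f x) * indicator (- E) (y, k))"
      if "(y, k) \<in> set_pmf (ia_step f x)" for y k
    proof -
      have y: "length y = n" "k \<le> n" "f y \<le> f x"
        using set_pmf_ia_step[OF that] x by auto
      have "W y \<le> W1 + w (f x) * indicator (- E) (y, k)"
      proof (cases "f y < f x")
        case True
        then have "W y \<le> W1"
          unfolding W_def W1_def using fitness_levels_less[OF True] finite_fitness_levels w_nonneg
          by (intro sum_mono2) auto
        then show ?thesis
          using True by (simp add: E_def)
      qed (use y W_x in \<open>simp add: W_def E_def fitness_levels_def\<close>)
      moreover have "0 \<le> W y"
        using w_nonneg by (simp add: W_def sum_nonneg)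
      ultimately show ?thesis
        using y by (simp add: T_def ennreal_of_nat_eq_real_of_nat ennreal_leI flip: ennreal_plus)
    qed
    then have "(\<integral>\<^sup>+ yk. (of_nat (snd yk) + T (fst yk)) \<partial>measure_pmf (ia_step f x))
        \<le> ennreal (real n + W1 + w (f x) * (1 - improve_prob f x))"
      unfolding improve_prob_def E_def[symmetric]
      using w_nonneg by (intro nn_integral_le_prob_compl) (auto simp: W1_def sum_nonneg)
    also have "\<dots> \<le> T x"
      using level_time[OF x] W_x x by (simp add: T_def algebra_simps ennreal_leI)
    finally show ?thesis .
  qed
  then have "remaining_evals f n \<le> T"
    unfolding remaining_evals_def by (intro lfp_lowerbound le_funI) (auto simp: T_def)
  then show ?thesis
    using \<open>length x = n\<close> by (auto simp: T_def W_def le_fun_def dest: spec[of _ x])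
qed

section \<open>Binomial estimates\<close>

lemma sum_binomial_le_power: "(\<Sum>k\<le>t. s choose k) \<le> 2 ^ s"
proof -
  have "(\<Sum>k\<le>t. s choose k) = (\<Sum>k\<in>{..t} \<inter> {..s}. s choose k)"
    by (rule sum.mono_neutral_right) auto
  also have "\<dots> \<le> (\<Sum>k\<le>s. s choose k)"
    by (rule sum_mono2) auto
  finally show ?thesis
    by (simp add: choose_row_sum)
qed

lemma binomial_add_le_central:
  "(a + b) choose q \<le> Suc q * ((a choose (a div 2)) * (b choose (b div 2)))"
proof -
  have "(a + b) choose q = (\<Sum>k\<le>q. (a choose k) * (b choose (q - k)))"
    by (rule vandermonde[symmetric])
  also have "\<dots> \<le> (\<Sum>k\<le>q. (a choose (a div 2)) * (b choose (b div 2)))"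
    by (intro sum_mono mult_mono binomial_maximum) auto
  finally show ?thesis
    by simp
qed

lemma binomial_add3_le_central:
  "(s + (a + b)) choose t \<le> 2 ^ s * (Suc t * ((a choose (a div 2)) * (b choose (b div 2))))"
proof -
  let ?M = "Suc t * ((a choose (a div 2)) * (b choose (b div 2)))"
  have "(s + (a + b)) choose t = (\<Sum>k\<le>t. (s choose k) * ((a + b) choose (t - k)))"
    by (rule vandermonde[symmetric])
  also have "\<dots> \<le> (\<Sum>k\<le>t. (s choose k) * ?M)"
  proof (intro sum_mono mult_left_mono)
    fix k
    have "(a + b) choose (t - k) \<le> Suc (t - k) * ((a choose (a div 2)) * (b choose (b div 2)))"
      by (rule binomial_add_le_central)
    also have "\<dots> \<le> ?M"
      by (intro mult_right_mono) auto
    finally show "(a + b) choose (t - k) \<le> ?M" .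
  qed simp
  also have "\<dots> \<le> 2 ^ s * ?M"
    unfolding sum_distrib_right[symmetric] by (intro mult_right_mono sum_binomial_le_power) auto
  finally show ?thesis .
qed

lemma binomial_half_up: "a choose (Suc a div 2) = a choose (a div 2)"
proof (cases "even a")
  case False
  then have "Suc a div 2 = a - a div 2"
    by presburger
  then show ?thesis
    using binomial_symmetric[of "a div 2" a] by simp
qed simp

lemma double_half_up_diff:
  fixes a b :: nat
  assumes "even (a + b)"
  shows "2 * real ((a + 1) div 2) - 2 * real ((b + 1) div 2) = real a - real b"
proof -
  have "2 * ((a + 1) div 2) + b = 2 * ((b + 1) div 2) + a"
    using assms by presburger
  then have "real (2 * ((a + 1) div 2) + b) = real (2 * ((b + 1) div 2) + a)"
    by (rule arg_cong)
  then show ?thesis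
    by simp
qed

lemma Suc_mult_binomial_Suc_le: "Suc k * (m choose Suc k) \<le> m * (m choose k)"
proof (cases m)
  case (Suc m')
  then have "Suc k * (m choose Suc k) = m * (m' choose k)"
    using Suc_times_binomial[of k m'] by simp
  also have "\<dots> \<le> m * (m choose k)"
    using Suc by (intro mult_left_mono binomial_right_mono) auto
  finally show ?thesis .
qed simp

lemma Suc_mult_binomial_add_le:
  assumes "2 * k \<le> m" "k < m"
  shows "Suc k * ((s + m) choose Suc k) \<le> 2 ^ s * (m * (m choose k))"
proof -
  have "Suc k * (m choose (Suc k - j)) \<le> m * (m choose k)" if "j \<le> Suc k" for j
  proof (cases j)
    case (Suc j')
    have "Suc k * (m choose (Suc k - j)) \<le> m * (m choose (Suc k - j))"
      using assms by (intro mult_right_mono) auto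
    also have "\<dots> \<le> m * (m choose k)"
      using assms Suc that by (intro mult_left_mono binomial_mono) auto
    finally show ?thesis .
  qed (use Suc_mult_binomial_Suc_le[of k m] in simp)
  then have "Suc k * ((s + m) choose Suc k) \<le> (\<Sum>j\<le>Suc k. (s choose j) * (m * (m choose k)))"
    unfolding vandermonde[symmetric] sum_distrib_left
    by (intro sum_mono) (metis atMost_iff mult.left_commute mult_left_mono zero_le)
  also have "\<dots> \<le> 2 ^ s * (m * (m choose k))"
    unfolding sum_distrib_right[symmetric] by (intro mult_right_mono sum_binomial_le_power) auto
  finally show ?thesis .
qed

lemma card_le_2_if_adjacent:
  fixes K :: "nat set"
  assumes "finite K" "\<And>a b. a \<in> K \<Longrightarrow> b \<in> K \<Longrightarrow> a \<le> b + 1"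
  shows "card K \<le> 2"
proof (cases "K = {}")
  case False
  have "K \<subseteq> {Min K, Min K + 1}"
  proof
    fix b
    assume "b \<in> K"
    moreover have "Min K \<in> K"
      using assms(1) False by simp
    ultimately have "Min K \<le> b" "b \<le> Min K + 1"
      using assms by auto
    then show "b \<in> {Min K, Min K + 1}"
      by auto
  qed
  then show ?thesis
    using card_mono[of "{Min K, Min K + 1}" K] by (simp add: card_insert_if)
qed simp

lemma card_insert_subsets:
  assumes "finite K" "J \<inter> K = {}"
  shows "card ((\<lambda>(j, R). insert j R) ` (J \<times> {R. R \<subseteq> K \<and> card R = k}))
    = card J * (card K choose k)"
proof -
  have "inj_on (\<lambda>(j, R). insert j R) (J \<times> {R. R \<subseteq> K \<and> card R = k})"
  proof (rule inj_onI, clarify)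
    fix j R j' R'
    assume "j \<in> J" "R \<subseteq> K" "j' \<in> J" "R' \<subseteq> K" and eq: "insert j R = insert j' R'"
    then have "j \<notin> R" "j' \<notin> R'" "j \<notin> R'" "j' \<notin> R"
      using assms(2) by auto
    then show "j = j' \<and> R = R'"
      using eq by (metis insert_eq_iff insert_iff)
  qed
  then show ?thesis
    using n_subsets[OF assms(1)] by (simp add: card_image card_cartesian_product)
qed

lemma card_Un_subsets:
  assumes "finite S" "finite T" "S \<inter> T = {}" "X \<inter> (S \<union> T) = {}"
  shows "card ((\<lambda>(Y, Z). X \<union> Y \<union> Z) ` ({Y. Y \<subseteq> S \<and> card Y = a} \<times> {Z. Z \<subseteq> T \<and> card Z = b}))
    = (card S choose a) * (card T choose b)"
proof -
  have "inj_on (\<lambda>(Y, Z). X \<union> Y \<union> Z) ({Y. Y \<subseteq> S \<and> card Y = a} \<times> {Z. Z \<subseteq> T \<and> card Z = b})"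
  proof (rule inj_onI, clarify)
    fix Y Z Y' Z'
    assume "Y \<subseteq> S" "Z \<subseteq> T" "Y' \<subseteq> S" "Z' \<subseteq> T" and eq: "X \<union> Y \<union> Z = X \<union> Y' \<union> Z'"
    then have "Y = (X \<union> Y \<union> Z) \<inter> S" "Y' = (X \<union> Y' \<union> Z') \<inter> S"
      "Z = (X \<union> Y \<union> Z) \<inter> T" "Z' = (X \<union> Y' \<union> Z') \<inter> T"
      using assms(3,4) by blast+
    then show "Y = Y' \<and> Z = Z'"
      using eq by metis
  qed
  then show ?thesis
    using n_subsets[OF assms(1)] n_subsets[OF assms(2)]
    by (simp add: card_image card_cartesian_product)
qed

section \<open>Instances with two processing times\<close>

locale two_job_sizes =
  fixes s n :: nat and A B :: real and p :: "nat \<Rightarrow> real"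
  assumes p_eq: "\<And>i. p i = (if i < s then A else B)"
    and A_pos: "0 < A" and B_pos: "0 < B" and s_less_n: "s < n"
    and even_s: "even s" and even_n: "even n"
begin

definition m :: nat where "m = n - s"

definition signed_time :: "bool list \<Rightarrow> nat \<Rightarrow> real" where
  "signed_time x i = (if x ! i then - p i else p i)"

definition imbalance :: "bool list \<Rightarrow> real" where
  "imbalance x = (\<Sum>i<n. signed_time x i)"

definition total_load :: real where
  "total_load = (\<Sum>i<n. p i)"

lemma p_pos: "0 < p i"
  using A_pos B_pos by (simp add: p_eq)

lemma total_load_pos: "0 < total_load"
  unfolding total_load_def using s_less_n p_pos by (intro sum_pos) auto

lemma lessThan_n_split: "{..<n} = {0..<s} \<union> {s..<n}"
  using s_less_n by auto

lemma makespan_eq_imbalance: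
  assumes "length x = n"
  shows "makespan p x = (total_load + \<bar>imbalance x\<bar>) / 2"
proof -
  define M1 where "M1 = (\<Sum>i<n. if x ! i then 0 else p i)"
  define M2 where "M2 = (\<Sum>i<n. if x ! i then p i else 0)"
  have "M1 + M2 = total_load"
    unfolding M1_def M2_def total_load_def by (simp flip: sum.distrib add: if_distrib cong: if_cong)
  moreover have "M1 - M2 = imbalance x"
    unfolding M1_def M2_def imbalance_def signed_time_def
    by (simp flip: sum_subtractf) (rule sum.cong, auto)
  moreover have "makespan p x = max M2 M1"
    unfolding makespan_def M1_def M2_def using assms by simp
  ultimately show ?thesis
    by (simp add: max_def abs_if field_simps)
qed

lemma imbalance_flips:
  assumes "length x = n" "Q \<subseteq> {..<n}"
  shows "imbalance (flips x Q) = imbalance x - 2 * (\<Sum>i\<in>Q. signed_time x i)"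
proof -
  have "imbalance (flips x Q) = (\<Sum>i<n. if i \<in> Q then - signed_time x i else signed_time x i)"
    unfolding imbalance_def using assms by (intro sum.cong) (auto simp: signed_time_def flips_def)
  also have "\<dots> = (\<Sum>i<n. signed_time x i) - 2 * (\<Sum>i<n. if i \<in> Q then signed_time x i else 0)"
    unfolding sum_distrib_left sum_subtractf[symmetric] by (rule sum.cong) auto
  also have "(\<Sum>i<n. if i \<in> Q then signed_time x i else 0) = (\<Sum>i\<in>Q. signed_time x i)"
    using assms(2) by (simp add: sum.If_cases Int_absorb1)
  finally show ?thesis
    unfolding imbalance_def .
qed

definition large_on_M1 :: "bool list \<Rightarrow> nat" where
  "large_on_M1 z = card {i \<in> {0..<s}. \<not> z ! i}"

definition small_on_M1 :: "bool list \<Rightarrow> nat" where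
  "small_on_M1 z = card {i \<in> {s..<n}. \<not> z ! i}"

definition imbalance_of_counts :: "nat \<Rightarrow> nat \<Rightarrow> real" where
  "imbalance_of_counts l q = A * (2 * real l - real s) + B * (2 * real q - real m)"

lemma large_on_M1_le: "large_on_M1 z \<le> s"
proof -
  have "large_on_M1 z \<le> card {0..<s}"
    unfolding large_on_M1_def by (rule card_mono) auto
  then show ?thesis
    by simp
qed

lemma small_on_M1_le: "small_on_M1 z \<le> m"
proof -
  have "small_on_M1 z \<le> card {s..<n}"
    unfolding small_on_M1_def by (rule card_mono) auto
  then show ?thesis
    by (simp add: m_def)
qed

lemma sum_signed_const:
  assumes "finite I"
  shows "(\<Sum>i\<in>I. if z ! i then - c else c) = c * (2 * real (card {i \<in> I. \<not> z ! i}) - real (card I))"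
proof -
  have "card I = card ({i \<in> I. z ! i} \<union> {i \<in> I. \<not> z ! i})"
    by (rule arg_cong[where f = card]) auto
  also have "\<dots> = card {i \<in> I. z ! i} + card {i \<in> I. \<not> z ! i}"
    using assms by (intro card_Un_disjoint) auto
  finally have "card I = card {i \<in> I. z ! i} + card {i \<in> I. \<not> z ! i}" .
  moreover have "(\<Sum>i\<in>I. if z ! i then - c else c)
      = - c * card {i \<in> I. z ! i} + c * card {i \<in> I. \<not> z ! i}"
    using assms by (simp add: sum.If_cases Int_def Compl_eq algebra_simps)
  ultimately show ?thesis
    by (simp add: algebra_simps)
qed

lemma imbalance_eq_counts:
  assumes "length z = n"
  shows "imbalance z = imbalance_of_counts (large_on_M1 z) (small_on_M1 z)"
proof -
  have "imbalance z = (\<Sum>i\<in>{0..<s}. signed_time z i) + (\<Sum>i\<in>{s..<n}. signed_time z i)"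
    unfolding imbalance_def lessThan_n_split by (rule sum.union_disjoint) auto
  also have "(\<Sum>i\<in>{0..<s}. signed_time z i) = (\<Sum>i\<in>{0..<s}. if z ! i then - A else A)"
    by (rule sum.cong) (auto simp: signed_time_def p_eq)
  also have "(\<Sum>i\<in>{s..<n}. signed_time z i) = (\<Sum>i\<in>{s..<n}. if z ! i then - B else B)"
    by (rule sum.cong) (auto simp: signed_time_def p_eq)
  finally show ?thesis
    by (simp add: sum_signed_const imbalance_of_counts_def large_on_M1_def small_on_M1_def m_def)
qed

lemma card_small_counts_balanced_le:
  "card {q \<in> {..m}. \<bar>imbalance_of_counts l q\<bar> \<le> B} \<le> 2"
proof (rule card_le_2_if_adjacent)
  fix a b
  assume "a \<in> {q \<in> {..m}. \<bar>imbalance_of_counts l q\<bar> \<le> B}"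
    and "b \<in> {q \<in> {..m}. \<bar>imbalance_of_counts l q\<bar> \<le> B}"
  moreover have "imbalance_of_counts l a - imbalance_of_counts l b = 2 * B * (real a - real b)"
    by (simp add: imbalance_of_counts_def algebra_simps)
  ultimately have "2 * B * (real a - real b) \<le> 2 * B"
    by auto
  then have "real a - real b \<le> 1"
    using mult_le_cancel_left_pos[of "2 * B" "real a - real b" 1] B_pos by simp
  then show "a \<le> b + 1"
    by linarith
qed auto

lemma card_counts_balanced_le:
  "card {(l, q). l \<le> s \<and> q \<le> m \<and> \<bar>imbalance_of_counts l q\<bar> \<le> B} \<le> 2 * (s + 1)"
proof -
  have "card {(l, q). l \<le> s \<and> q \<le> m \<and> \<bar>imbalance_of_counts l q\<bar> \<le> B}
      \<le> card (\<Union>l\<in>{..s}. {l} \<times> {q \<in> {..m}. \<bar>imbalance_of_counts l q\<bar> \<le> B})"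
    by (intro card_mono) auto
  also have "\<dots> \<le> (\<Sum>l\<le>s. card ({l} \<times> {q \<in> {..m}. \<bar>imbalance_of_counts l q\<bar> \<le> B}))"
    by (rule card_UN_le) simp
  also have "\<dots> \<le> (\<Sum>l\<le>s. 2)"
    using card_small_counts_balanced_le by (intro sum_mono) (simp add: card_cartesian_product)
  finally show ?thesis
    by simp
qed

lemma makespan_values_subset:
  "makespan p ` {z. length z = n}
    \<subseteq> (\<lambda>(l, q). (total_load + \<bar>imbalance_of_counts l q\<bar>) / 2) ` ({..s} \<times> {..m})"
proof (rule image_subsetI)
  fix z :: "bool list"
  assume "z \<in> {z. length z = n}"
  then show "makespan p z
      \<in> (\<lambda>(l, q). (total_load + \<bar>imbalance_of_counts l q\<bar>) / 2) ` ({..s} \<times> {..m})"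
    using makespan_eq_imbalance imbalance_eq_counts large_on_M1_le small_on_M1_le
    by (intro image_eqI[where x = "(large_on_M1 z, small_on_M1 z)"]) auto
qed

lemma card_makespan_values_le: "card (makespan p ` {z. length z = n}) \<le> (s + 1) * (m + 1)"
proof -
  have "card (makespan p ` {z. length z = n})
      \<le> card ((\<lambda>(l, q). (total_load + \<bar>imbalance_of_counts l q\<bar>) / 2) ` ({..s} \<times> {..m}))"
    by (rule card_mono[OF _ makespan_values_subset]) simp
  also have "\<dots> \<le> card ({..s} \<times> {..m})"
    by (rule card_image_le) simp
  finally show ?thesis
    by (simp add: card_cartesian_product)
qed

lemma card_makespan_values_balanced_le:
  "card {v \<in> makespan p ` {z. length z = n}. 2 * v - total_load \<le> B} \<le> 2 * (s + 1)"
proof -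
  let ?P = "{(l, q). l \<le> s \<and> q \<le> m \<and> \<bar>imbalance_of_counts l q\<bar> \<le> B}"
  have fin: "finite ?P"
    by (rule finite_subset[of _ "{..s} \<times> {..m}"]) auto
  have "{v \<in> makespan p ` {z. length z = n}. 2 * v - total_load \<le> B}
      \<subseteq> (\<lambda>(l, q). (total_load + \<bar>imbalance_of_counts l q\<bar>) / 2) ` ?P"
  proof
    fix v
    assume "v \<in> {v \<in> makespan p ` {z. length z = n}. 2 * v - total_load \<le> B}"
    then obtain z where "length z = n" "v = makespan p z" "2 * v - total_load \<le> B"
      by auto
    then show "v \<in> (\<lambda>(l, q). (total_load + \<bar>imbalance_of_counts l q\<bar>) / 2) ` ?P"
      using makespan_eq_imbalance imbalance_eq_counts large_on_M1_le small_on_M1_le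
      by (intro image_eqI[where x = "(large_on_M1 z, small_on_M1 z)"]) auto
  qed
  then have "card {v \<in> makespan p ` {z. length z = n}. 2 * v - total_load \<le> B} \<le> card ?P"
    using fin by (meson card_image_le card_mono finite_imageI order_trans)
  then show ?thesis
    using card_counts_balanced_le by linarith
qed

end

section \<open>Improvement probabilities\<close>

locale two_job_sizes_solution = two_job_sizes +
  fixes x :: "bool list"
  assumes length_x: "length x = n" and imbalance_x_nonzero: "imbalance x \<noteq> 0"
begin

definition gap :: real where "gap = \<bar>imbalance x\<bar>"

text \<open>\<open>contrib i\<close> is \<open>p i\<close> if job \<open>i\<close> is on the fuller machine and \<open>- p i\<close> otherwise.\<close>
definition contrib :: "nat \<Rightarrow> real" where "contrib i = sgn (imbalance x) * signed_time x i"

definition heavy_large :: "nat set" where "heavy_large = {i \<in> {0..<s}. 0 < contrib i}"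
definition light_large :: "nat set" where "light_large = {i \<in> {0..<s}. contrib i < 0}"
definition heavy_small :: "nat set" where "heavy_small = {i \<in> {s..<n}. 0 < contrib i}"
definition light_small :: "nat set" where "light_small = {i \<in> {s..<n}. contrib i < 0}"

lemmas job_classes_def = heavy_large_def light_large_def heavy_small_def light_small_def

lemma contrib_cases: "contrib i = p i \<or> contrib i = - p i"
  using imbalance_x_nonzero by (auto simp: contrib_def signed_time_def sgn_if)

lemma gap_pos: "0 < gap"
  using imbalance_x_nonzero by (simp add: gap_def)

lemma gap_eq_sum: "gap = (\<Sum>i<n. contrib i)"
  by (simp add: gap_def contrib_def imbalance_def abs_sgn flip: sum_distrib_left)

lemma abs_imbalance_flips:
  assumes "Q \<subseteq> {..<n}"
  shows "\<bar>imbalance (flips x Q)\<bar> = \<bar>gap - 2 * (\<Sum>i\<in>Q. contrib i)\<bar>"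
proof -
  have "(\<Sum>i\<in>Q. contrib i) = sgn (imbalance x) * (\<Sum>i\<in>Q. signed_time x i)"
    by (simp add: contrib_def sum_distrib_left)
  moreover have "gap = sgn (imbalance x) * imbalance x"
    by (simp add: gap_def abs_sgn mult.commute)
  ultimately have "gap - 2 * (\<Sum>i\<in>Q. contrib i) = sgn (imbalance x) * imbalance (flips x Q)"
    unfolding imbalance_flips[OF length_x assms] by (simp add: algebra_simps)
  then show ?thesis
    using imbalance_x_nonzero by (simp add: abs_mult)
qed

lemma makespan_flips_less_iff:
  assumes "Q \<subseteq> {..<n}"
  shows "makespan p (flips x Q) < makespan p x \<longleftrightarrow> \<bar>gap - 2 * (\<Sum>i\<in>Q. contrib i)\<bar> < gap"
  using makespan_eq_imbalance[of "flips x Q"] makespan_eq_imbalance[OF length_x]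
    abs_imbalance_flips[OF assms] length_x by (simp add: gap_def) linarith

lemma contrib_job_classes:
  "i \<in> heavy_large \<Longrightarrow> contrib i = A" "i \<in> light_large \<Longrightarrow> contrib i = - A"
  "i \<in> heavy_small \<Longrightarrow> contrib i = B" "i \<in> light_small \<Longrightarrow> contrib i = - B"
  using contrib_cases[of i] p_eq[of i] A_pos B_pos by (auto simp: job_classes_def)

lemma sum_contrib_job_classes:
  "Q \<subseteq> heavy_large \<Longrightarrow> (\<Sum>i\<in>Q. contrib i) = A * card Q"
  "Q \<subseteq> light_large \<Longrightarrow> (\<Sum>i\<in>Q. contrib i) = - A * card Q"
  "Q \<subseteq> heavy_small \<Longrightarrow> (\<Sum>i\<in>Q. contrib i) = B * card Q"
  "Q \<subseteq> light_small \<Longrightarrow> (\<Sum>i\<in>Q. contrib i) = - B * card Q"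
proof -
  have sum_const: "(\<Sum>i\<in>Q. contrib i) = c * card Q" if "\<And>i. i \<in> Q \<Longrightarrow> contrib i = c" for c
    using sum.cong[of Q Q contrib "\<lambda>_. c"] that by simp
  show "Q \<subseteq> heavy_large \<Longrightarrow> (\<Sum>i\<in>Q. contrib i) = A * card Q"
    "Q \<subseteq> light_large \<Longrightarrow> (\<Sum>i\<in>Q. contrib i) = - A * card Q"
    "Q \<subseteq> heavy_small \<Longrightarrow> (\<Sum>i\<in>Q. contrib i) = B * card Q"
    "Q \<subseteq> light_small \<Longrightarrow> (\<Sum>i\<in>Q. contrib i) = - B * card Q"
    using contrib_job_classes by (blast intro: sum_const)+
qed

lemma finite_job_classes:
  "finite heavy_large" "finite light_large" "finite heavy_small" "finite light_small"
  by (auto simp: job_classes_def)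

lemma large_jobs_split: "{0..<s} = heavy_large \<union> light_large" "heavy_large \<inter> light_large = {}"
  and small_jobs_split: "{s..<n} = heavy_small \<union> light_small" "heavy_small \<inter> light_small = {}"
  using contrib_cases p_pos by (auto simp: job_classes_def) (smt (verit))+

lemma job_classes_disjoint:
  "heavy_large \<inter> heavy_small = {}" "heavy_large \<inter> light_small = {}"
  "light_large \<inter> heavy_small = {}" "light_large \<inter> light_small = {}"
  by (auto simp: job_classes_def)

lemma card_large_jobs_split: "card heavy_large + card light_large = s"
  using card_Un_disjoint[OF finite_job_classes(1,2) large_jobs_split(2)] large_jobs_split(1)
  by (metis card_atLeastLessThan diff_zero)

lemma card_small_jobs_split: "card heavy_small + card light_small = m"
  using card_Un_disjoint[OF finite_job_classes(3,4) small_jobs_split(2)] small_jobs_split(1)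
  by (metis card_atLeastLessThan m_def)

lemma card_sum_contrib_Un_job_classes:
  assumes "X \<subseteq> heavy_large" "X' \<subseteq> light_large" "Y \<subseteq> heavy_small" "Y' \<subseteq> light_small"
  shows "card (X \<union> X' \<union> Y \<union> Y') = card X + card X' + card Y + card Y'"
    and "(\<Sum>i\<in>X \<union> X' \<union> Y \<union> Y'. contrib i) = A * card X - A * card X' + B * card Y - B * card Y'"
proof -
  have fin: "finite X" "finite X'" "finite Y" "finite Y'"
    using assms finite_job_classes finite_subset by blast+
  have disj: "X \<inter> X' = {}" "(X \<union> X') \<inter> Y = {}" "(X \<union> X' \<union> Y) \<inter> Y' = {}"
    using assms large_jobs_split(2) small_jobs_split(2) job_classes_disjoint by blast+
  show "card (X \<union> X' \<union> Y \<union> Y') = card X + card X' + card Y + card Y'"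
    using fin disj by (simp only: card_Un_disjoint finite_Un)
  show "(\<Sum>i\<in>X \<union> X' \<union> Y \<union> Y'. contrib i) = A * card X - A * card X' + B * card Y - B * card Y'"
    using fin disj sum_contrib_job_classes(1)[OF assms(1)] sum_contrib_job_classes(2)[OF assms(2)]
      sum_contrib_job_classes(3)[OF assms(3)] sum_contrib_job_classes(4)[OF assms(4)]
    by (simp only: sum.union_disjoint finite_Un)
qed

lemma gap_eq_counts:
  "gap = A * card heavy_large - A * card light_large + B * card heavy_small - B * card light_small"
proof -
  have "{..<n} = heavy_large \<union> light_large \<union> heavy_small \<union> light_small"
    using lessThan_n_split large_jobs_split small_jobs_split by auto
  then show ?thesis
    using card_sum_contrib_Un_job_classes(2)[OF order_refl order_refl order_refl order_refl]
    unfolding gap_eq_sum by (simp only:)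
qed

lemma improve_prob_ge_card:
  assumes "t \<le> n"
    and "\<And>Q. Q \<in> G \<Longrightarrow> Q \<subseteq> {..<n} \<and> card Q = t \<and> \<bar>gap - 2 * (\<Sum>i\<in>Q. contrib i)\<bar> < gap"
  shows "card G / (n choose t) \<le> improve_prob (makespan p) x"
proof -
  have "G \<subseteq> improving_subsets (makespan p) x x {..<n} t"
  proof
    fix Q
    assume "Q \<in> G"
    then show "Q \<in> improving_subsets (makespan p) x x {..<n} t"
      using assms(2)[of Q] makespan_flips_less_iff[of Q] length_x
      by (simp add: improving_subsets_def)
  qed
  moreover have "finite (improving_subsets (makespan p) x x {..<n} t)"
    by (rule finite_subset[of _ "Pow {..<n}"]) (auto simp: improving_subsets_def)
  ultimately have "card G \<le> card (improving_subsets (makespan p) x x {..<n} t)"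
    by (rule card_mono[rotated])
  then have "real (card G) / (n choose t)
      \<le> card (improving_subsets (makespan p) x x {..<n} t) / (n choose t)"
    by (intro divide_right_mono) auto
  also have "\<dots> \<le> improve_prob (makespan p) x"
    using improve_prob_ge[of t x "makespan p"] assms(1) length_x by simp
  finally show ?thesis .
qed

lemma improve_prob_ge_heavy_small:
  assumes "B < gap"
  shows "card heavy_small / n \<le> improve_prob (makespan p) x"
proof -
  have "Q \<subseteq> {..<n} \<and> card Q = 1 \<and> \<bar>gap - 2 * (\<Sum>i\<in>Q. contrib i)\<bar> < gap"
    if Q: "Q \<in> (\<lambda>i. {i}) ` heavy_small" for Q
  proof -
    obtain i where i: "i \<in> heavy_small" "Q = {i}"
      using Q by blast
    then have "i < n"
      by (auto simp: heavy_small_def)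
    then show ?thesis
      using i contrib_job_classes(3)[OF i(1)] assms B_pos by (simp add: abs_less_iff)
  qed
  moreover have "1 \<le> n"
    using s_less_n by simp
  ultimately have "card ((\<lambda>i. {i}) ` heavy_small) / (n choose 1) \<le> improve_prob (makespan p) x"
    by (intro improve_prob_ge_card)
  then show ?thesis
    by (simp add: card_image)
qed

lemma all_large_heavy_improves:
  assumes "card heavy_large = s" and "real k * B < A"
    and "real m * B - (real s - 1) * A < real k * B"
    and "j < s" "R \<subseteq> {s..<n}" "card R = k"
  shows "\<bar>gap - 2 * (\<Sum>i\<in>insert j R. contrib i)\<bar> < gap"
proof -
  have "light_large = {}"
    using card_large_jobs_split assms(1) finite_job_classes(2) by simp
  then have "heavy_large = {0..<s}"
    using large_jobs_split(1) by simp
  define a where "a = card (R \<inter> heavy_small)"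
  define b where "b = card (R \<inter> light_small)"
  have R: "insert j R = {j} \<union> {} \<union> (R \<inter> heavy_small) \<union> (R \<inter> light_small)"
    using assms(5) small_jobs_split(1) by auto
  have classes: "{j} \<subseteq> heavy_large" "{} \<subseteq> light_large"
    "R \<inter> heavy_small \<subseteq> heavy_small" "R \<inter> light_small \<subseteq> light_small"
    using \<open>heavy_large = {0..<s}\<close> assms(4) by auto
  have "card R = card ((R \<inter> heavy_small) \<union> (R \<inter> light_small))"
    using assms(5) small_jobs_split(1) by (intro arg_cong[where f = card]) auto
  also have "\<dots> = a + b"
    unfolding a_def b_def using finite_job_classes(3,4) small_jobs_split(2)
    by (intro card_Un_disjoint) auto
  finally have "card R = a + b" .
  have "(\<Sum>i\<in>insert j R. contrib i) = A + B * a - B * b"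
    using card_sum_contrib_Un_job_classes(2)[OF classes] R by (simp add: a_def b_def)
  moreover have "B * a \<le> B * card heavy_small"
    unfolding a_def using B_pos finite_job_classes(3) by (simp add: card_mono)
  moreover have "B * a + B * b = B * k" "B * card heavy_small + B * card light_small = B * m"
    using \<open>card R = a + b\<close> assms(6) card_small_jobs_split by (simp_all flip: distrib_left)
  moreover have "0 \<le> B * a" "0 \<le> B * b"
    using B_pos by simp_all
  ultimately show ?thesis
    using gap_eq_counts assms(1-3) \<open>light_large = {}\<close> by (simp add: abs_less_iff algebra_simps)
qed

lemma improve_prob_ge_all_large_heavy:
  assumes "card heavy_large = s" and "real k * B < A"
    and "real m * B - (real s - 1) * A < real k * B"
    and "k < m"
  shows "real s * (m choose k) / (n choose Suc k) \<le> improve_prob (makespan p) x"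
proof -
  define G where "G = (\<lambda>(j, R). insert j R) ` ({0..<s} \<times> {R. R \<subseteq> {s..<n} \<and> card R = k})"
  have "card G = s * (m choose k)"
    unfolding G_def m_def by (subst card_insert_subsets) auto
  moreover have "Q \<subseteq> {..<n} \<and> card Q = Suc k \<and> \<bar>gap - 2 * (\<Sum>i\<in>Q. contrib i)\<bar> < gap"
    if "Q \<in> G" for Q
  proof -
    obtain j R where "j < s" "R \<subseteq> {s..<n}" "card R = k" and Q: "Q = insert j R"
      using \<open>Q \<in> G\<close> by (auto simp: G_def)
    moreover have "finite R" "j \<notin> R"
      using \<open>R \<subseteq> {s..<n}\<close> \<open>j < s\<close> finite_subset by auto
    moreover have "\<bar>gap - 2 * (\<Sum>i\<in>insert j R. contrib i)\<bar> < gap"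
      using all_large_heavy_improves[OF assms(1-3)] calculation by blast
    ultimately show ?thesis
      using s_less_n by auto
  qed
  moreover have "Suc k \<le> n"
    using assms(4) by (simp add: m_def)
  ultimately show ?thesis
    using improve_prob_ge_card[of "Suc k" G] by simp
qed

text \<open>Moving half of each of the four job classes (rounded up) balances the machines exactly,
  because \<open>s\<close> and \<open>n - s\<close> are even.\<close>
lemma sum_contrib_halves:
  assumes "X \<subseteq> heavy_large" "card X = (card heavy_large + 1) div 2"
    and "X' \<subseteq> light_large" "card X' = (card light_large + 1) div 2"
    and "Y \<subseteq> heavy_small" "card Y = (card heavy_small + 1) div 2"
    and "Y' \<subseteq> light_small" "card Y' = (card light_small + 1) div 2"
  shows "2 * (\<Sum>i\<in>X \<union> X' \<union> Y \<union> Y'. contrib i) = gap"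
proof -
  have "even (card heavy_large + card light_large)" "even (card heavy_small + card light_small)"
    using card_large_jobs_split card_small_jobs_split even_s even_n s_less_n
    by (simp_all add: m_def)
  have "2 * (\<Sum>i\<in>X \<union> X' \<union> Y \<union> Y'. contrib i)
      = A * (2 * real (card X) - 2 * real (card X')) + B * (2 * real (card Y) - 2 * real (card Y'))"
    using card_sum_contrib_Un_job_classes(2)[OF assms(1,3,5,7)] by (simp add: algebra_simps)
  also have "\<dots> = A * (real (card heavy_large) - real (card light_large))
      + B * (real (card heavy_small) - real (card light_small))"
    unfolding assms(2,4,6,8) double_half_up_diff[OF \<open>even (card heavy_large + card light_large)\<close>]
      double_half_up_diff[OF \<open>even (card heavy_small + card light_small)\<close>] ..
  also have "\<dots> = gap"
    by (simp add: gap_eq_counts algebra_simps)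
  finally show ?thesis .
qed

text \<open>Only the choice among the small jobs is varied, which already yields a fraction
  \<open>1 / (2 ^ s * (t + 1))\<close> of all \<open>t\<close>-subsets.\<close>
lemma balancing_subsets:
  obtains t G where "t \<le> n" "0 < card G"
    "\<And>Q. Q \<in> G \<Longrightarrow> Q \<subseteq> {..<n} \<and> card Q = t \<and> 2 * (\<Sum>i\<in>Q. contrib i) = gap"
    "real (n choose t) \<le> 2 ^ s * (real t + 1) * card G"
proof -
  let ?hl = "card heavy_large" and ?ll = "card light_large"
    and ?hs = "card heavy_small" and ?ls = "card light_small"
  have "(?hl + 1) div 2 \<le> ?hl" "(?ll + 1) div 2 \<le> ?ll"
    by presburger+
  then obtain X X' where X: "X \<subseteq> heavy_large" "card X = (?hl + 1) div 2"
    and X': "X' \<subseteq> light_large" "card X' = (?ll + 1) div 2"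
    by (meson obtain_subset_with_card_n)
  define G where "G = (\<lambda>(Y, Y'). X \<union> X' \<union> Y \<union> Y')
    ` ({Y. Y \<subseteq> heavy_small \<and> card Y = (?hs + 1) div 2}
      \<times> {Y'. Y' \<subseteq> light_small \<and> card Y' = (?ls + 1) div 2})"
  define t where "t = card X + card X' + (?hs + 1) div 2 + (?ls + 1) div 2"
  have card_G: "card G = (?hs choose (?hs div 2)) * (?ls choose (?ls div 2))"
    unfolding G_def
    using X X' finite_job_classes large_jobs_split(2) small_jobs_split(2) job_classes_disjoint
    by (subst card_Un_subsets) (auto simp: binomial_half_up)
  have G: "Q \<subseteq> {..<n} \<and> card Q = t \<and> 2 * (\<Sum>i\<in>Q. contrib i) = gap" if "Q \<in> G" for Q
  proof -
    obtain Y Y' where Y: "Y \<subseteq> heavy_small" "card Y = (?hs + 1) div 2"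
      and Y': "Y' \<subseteq> light_small" "card Y' = (?ls + 1) div 2" and Q: "Q = X \<union> X' \<union> Y \<union> Y'"
      using \<open>Q \<in> G\<close> by (auto simp: G_def)
    have "Q \<subseteq> {..<n}"
      using Q X(1) X'(1) Y(1) Y'(1) lessThan_n_split large_jobs_split(1) small_jobs_split(1) by auto
    then show ?thesis
      using card_sum_contrib_Un_job_classes(1)[OF X(1) X'(1) Y(1) Y'(1)]
        sum_contrib_halves[OF X X' Y Y'] Q
      by (simp add: t_def Y(2) Y'(2))
  qed
  have "0 < card G"
    using card_G by simp
  then obtain Q where "Q \<in> G"
    by (metis card_gt_0_iff ex_in_conv)
  then have "t \<le> n"
    using G by (metis card_lessThan card_mono finite_lessThan)
  have "n = s + (?hs + ?ls)"
    using card_small_jobs_split s_less_n by (simp add: m_def)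
  then have "n choose t \<le> 2 ^ s * (Suc t * card G)"
    unfolding card_G by (metis binomial_add3_le_central)
  then have "real (n choose t) \<le> 2 ^ s * (real t + 1) * card G"
    using of_nat_mono[of "n choose t"] by (fastforce simp: algebra_simps)
  with \<open>t \<le> n\<close> \<open>0 < card G\<close> G show ?thesis
    by (rule that)
qed

lemma improve_prob_ge_balancing: "1 / (2 ^ s * (real n + 1)) \<le> improve_prob (makespan p) x"
proof -
  obtain t G where G: "t \<le> n" "0 < card G"
    "\<And>Q. Q \<in> G \<Longrightarrow> Q \<subseteq> {..<n} \<and> card Q = t \<and> 2 * (\<Sum>i\<in>Q. contrib i) = gap"
    "real (n choose t) \<le> 2 ^ s * (real t + 1) * card G"
    using balancing_subsets by blast
  have "1 / (2 ^ s * (real n + 1)) \<le> 1 / (2 ^ s * (real t + 1))"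
    using G(1) by (intro divide_left_mono mult_left_mono) auto
  also have "\<dots> = card G / (2 ^ s * (real t + 1) * card G)"
    using G(2) by simp
  also have "\<dots> \<le> card G / (n choose t)"
    using G(1,2,4) by (intro divide_left_mono) auto
  also have "\<dots> \<le> improve_prob (makespan p) x"
    using G(1,3) gap_pos by (intro improve_prob_ge_card) auto
  finally show ?thesis .
qed

end

context two_job_sizes
begin

lemma opt_value_eq: "opt_value (makespan p) n = total_load / 2"
proof -
  define x0 where "x0 = replicate n False"
  have "length x0 = n" "imbalance x0 = total_load"
    by (simp_all add: x0_def imbalance_def total_load_def signed_time_def)
  then interpret x0: two_job_sizes_solution s n A B p x0
    using total_load_pos by unfold_locales simp_all
  obtain Q where Q: "Q \<subseteq> {..<n}" "2 * (\<Sum>i\<in>Q. x0.contrib i) = x0.gap"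
    using x0.balancing_subsets by (metis card_gt_0_iff ex_in_conv)
  then have "makespan p (flips x0 Q) = total_load / 2"
    using makespan_eq_imbalance[of "flips x0 Q"] x0.abs_imbalance_flips[OF Q(1)] \<open>length x0 = n\<close>
    by simp
  then have "total_load / 2 \<in> makespan p ` {z. length z = n}"
    using \<open>length x0 = n\<close> by (metis (mono_tags) image_eqI length_flips mem_Collect_eq)
  moreover have "total_load / 2 \<le> makespan p z" if "length z = n" for z
    using makespan_eq_imbalance[OF that] by simp
  ultimately show ?thesis
    unfolding opt_value_def using finite_lists_length_eq[of "UNIV :: bool set" n]
    by (intro Min_eqI) auto
qed

end

section \<open>Expected runtime\<close>

text \<open>\<open>k\<close> is the number of small jobs moved together with one large job when all large jobs are
  on the fuller machine, and \<open>p0\<close> bounds the improvement probability whenever the imbalance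
  exceeds \<open>B\<close>.\<close>
locale two_job_sizes_parameters = two_job_sizes +
  fixes k :: nat and p0 :: real
  assumes small_jobs_outweigh: "(real s - 1) * A < real m * B"
    and k_lower: "real m * B - (real s - 1) * A < real k * B" and k_upper: "real k * B < A"
    and k_half: "2 * k \<le> m" and k_less: "k < m"
    and p0_pos: "0 < p0"
    and p0_le_heavy_small: "p0 \<le> A / (2 * B * n)"
    and p0_le_binomial: "p0 \<le> real s * Suc k / (2 ^ s * m)"
begin

lemma p0_le_binomial_ratio: "p0 \<le> real s * (m choose k) / (n choose Suc k)"
proof -
  have "n = s + m"
    using s_less_n by (simp add: m_def)
  then have "real (Suc k) * (n choose Suc k) \<le> 2 ^ s * (real m * (m choose k))"
    using Suc_mult_binomial_add_le[OF k_half k_less, of s]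
    by (metis of_nat_le_iff of_nat_mult of_nat_numeral of_nat_power)
  then have "real s * (real (Suc k) * (n choose Suc k))
      \<le> real s * (2 ^ s * (real m * (m choose k)))"
    by (rule mult_left_mono) simp
  moreover have "0 < m choose k" "0 < n choose Suc k"
    using k_less s_less_n by (auto simp: m_def)
  ultimately have "real s * Suc k / (2 ^ s * m) \<le> real s * (m choose k) / (n choose Suc k)"
    using k_less by (simp add: field_simps)
  then show ?thesis
    using p0_le_binomial by linarith
qed

lemma improve_prob_ge_p0:
  assumes "length x = n" and "B < \<bar>imbalance x\<bar>"
  shows "p0 \<le> improve_prob (makespan p) x"
proof -
  interpret x: two_job_sizes_solution s n A B p x
    using assms B_pos by unfold_locales auto
  show ?thesis
  proof (cases "card x.heavy_large = s")
    case True
    then show ?thesis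
      using x.improve_prob_ge_all_large_heavy[OF True k_upper k_lower k_less] p0_le_binomial_ratio
      by linarith
  next
    case False
    then have "real (card x.heavy_large) + 1 \<le> real s"
      using x.card_large_jobs_split by linarith
    then have "A * card x.heavy_large + A \<le> A * s"
      using A_pos mult_left_mono[of _ _ A] by (fastforce simp: algebra_simps)
    moreover have "A * card x.heavy_large + A * card x.light_large = A * s"
      "B * card x.heavy_small + B * card x.light_small = B * m"
      using x.card_large_jobs_split x.card_small_jobs_split by (simp_all flip: distrib_left)
    ultimately have "A < 2 * B * card x.heavy_small"
      using x.gap_eq_counts assms(2) small_jobs_outweigh unfolding x.gap_def
      by (simp add: algebra_simps)
    then have "A / (2 * B * n) \<le> card x.heavy_small / n"
      using B_pos s_less_n by (simp add: field_simps)
    then show ?thesis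
      using p0_le_heavy_small x.improve_prob_ge_heavy_small assms(2) unfolding x.gap_def by linarith
  qed
qed

text \<open>The expected number of evaluations spent on a fitness level is \<open>O(n)\<close>, except on the
  at most \<open>2 * (s + 1)\<close> levels with imbalance at most \<open>B\<close>, where only the balancing subsets
  help and \<open>O(n\<^sup>2)\<close> evaluations are needed.\<close>
definition level_weight :: "real \<Rightarrow> real" where
  "level_weight v = (if 2 * v - total_load \<le> B then n * (2 ^ s * (n + 1)) else n / p0)"

lemma level_weight_nonneg: "0 \<le> level_weight v"
  using p0_pos by (simp add: level_weight_def)

lemma n_le_level_weight_mult_improve_prob:
  assumes "length y = n" "makespan p y \<noteq> opt_value (makespan p) n"
  shows "real n \<le> level_weight (makespan p y) * improve_prob (makespan p) y"
proof -
  have "imbalance y \<noteq> 0" and imbalance_y: "2 * makespan p y - total_load = \<bar>imbalance y\<bar>"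
    using assms makespan_eq_imbalance[OF assms(1)] opt_value_eq by auto
  then interpret y: two_job_sizes_solution s n A B p y
    using assms(1) by unfold_locales
  show ?thesis
  proof (cases "\<bar>imbalance y\<bar> \<le> B")
    case True
    have "0 < 2 ^ s * (real n + 1)"
      by simp
    then have "1 \<le> improve_prob (makespan p) y * (2 ^ s * (real n + 1))"
      using y.improve_prob_ge_balancing by (simp only: divide_le_eq if_True)
    then have "real n * 1 \<le> real n * (improve_prob (makespan p) y * (2 ^ s * (real n + 1)))"
      by (intro mult_left_mono) auto
    then show ?thesis
      using True imbalance_y by (simp add: level_weight_def algebra_simps)
  next
    case False
    then have "real n / p0 * p0 \<le> real n / p0 * improve_prob (makespan p) y"
      using improve_prob_ge_p0[OF assms(1)] p0_pos by (intro mult_left_mono) auto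
    then show ?thesis
      using False imbalance_y p0_pos by (simp add: level_weight_def)
  qed
qed

lemma sum_level_weight_le:
  "(\<Sum>v\<in>makespan p ` {z. length z = n}. level_weight v)
    \<le> (2 * (s + 1) / p0 + 4 * (s + 1) * 2 ^ s) * real n ^ 2"
proof -
  let ?V = "makespan p ` {z. length z = n}" and ?K = "real n * (2 ^ s * (n + 1))"
  have "finite ?V"
    using finite_lists_length_eq[of "UNIV :: bool set" n] by simp
  have "real (m + 1) \<le> 2 * real n" "real n + 1 \<le> 2 * real n"
    using s_less_n by (simp_all add: m_def)
  then have "real ((s + 1) * (m + 1)) \<le> real (s + 1) * (2 * n)"
    unfolding of_nat_mult by (intro mult_left_mono) simp_all
  have "(\<Sum>v\<in>?V. level_weight v) \<le> (\<Sum>v\<in>?V. real n / p0 + (if 2 * v - total_load \<le> B then ?K else 0))"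
    using p0_pos by (intro sum_mono) (auto simp: level_weight_def)
  also have "\<dots> = card ?V * (real n / p0) + card {v \<in> ?V. 2 * v - total_load \<le> B} * ?K"
    using \<open>finite ?V\<close> by (simp add: sum.distrib sum.If_cases Int_def)
  also have "\<dots> \<le> real ((s + 1) * (m + 1)) * (real n / p0) + real (2 * (s + 1)) * ?K"
  proof (intro add_mono mult_right_mono)
    show "real (card ?V) \<le> real ((s + 1) * (m + 1))"
      using card_makespan_values_le by (simp only: of_nat_le_iff)
    show "real (card {v \<in> ?V. 2 * v - total_load \<le> B}) \<le> real (2 * (s + 1))"
      using card_makespan_values_balanced_le by (simp only: of_nat_le_iff)
  qed (use p0_pos in simp_all)
  also have "\<dots>
      \<le> (real (s + 1) * (2 * n)) * (real n / p0) + real (2 * (s + 1)) * (real n * (2 ^ s * (2 * n)))"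
    using \<open>real ((s + 1) * (m + 1)) \<le> real (s + 1) * (2 * n)\<close> \<open>real n + 1 \<le> 2 * real n\<close> p0_pos
    by (intro add_mono mult_right_mono mult_left_mono) simp_all
  also have "\<dots> = (2 * (s + 1) / p0 + 4 * (s + 1) * 2 ^ s) * real n ^ 2"
    by (simp add: power2_eq_square field_simps)
  finally show ?thesis .
qed

lemma remaining_evals_le:
  assumes "length x = n"
  shows "remaining_evals (makespan p) n x
    \<le> ennreal ((2 * (s + 1) / p0 + 4 * (s + 1) * 2 ^ s) * real n ^ 2)"
proof -
  have "(\<Sum>v\<in>fitness_levels (makespan p) n x. level_weight v)
      \<le> (\<Sum>v\<in>makespan p ` {z. length z = n}. level_weight v)"
    using finite_lists_length_eq[of "UNIV :: bool set" n] level_weight_nonneg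
    by (intro sum_mono2) (auto simp: fitness_levels_def)
  then show ?thesis
    using remaining_evals_le_fitness_levels[OF level_weight_nonneg
        n_le_level_weight_mult_improve_prob assms] sum_level_weight_le
    by (meson ennreal_leI order_trans)
qed

lemma expected_runtime_le:
  "expected_runtime p n \<le> ennreal ((1 + 2 * (s + 1) / p0 + 4 * (s + 1) * 2 ^ s) * real n ^ 2)"
proof -
  define C where "C = 2 * (s + 1) / p0 + 4 * (s + 1) * 2 ^ s"
  have "0 \<le> C"
    using p0_pos by (simp add: C_def)
  have "finite {x :: bool list. length x = n}" "{x :: bool list. length x = n} \<noteq> {}"
    using finite_lists_length_eq[of "UNIV :: bool set" n]
    by (auto intro: exI[of _ "replicate n False"])
  then have "(\<integral>\<^sup>+ x. remaining_evals (makespan p) n x \<partial>measure_pmf (pmf_of_set {x. length x = n}))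
      \<le> (\<integral>\<^sup>+ x. ennreal (C * real n ^ 2) \<partial>measure_pmf (pmf_of_set {x :: bool list. length x = n}))"
    using remaining_evals_le by (intro nn_integral_mono_AE) (simp add: AE_measure_pmf_iff C_def)
  then have "expected_runtime p n \<le> 1 + ennreal (C * real n ^ 2)"
    by (simp add: expected_runtime_def measure_pmf.emeasure_space_1 add_left_mono)
  also have "\<dots> = ennreal (1 + C * real n ^ 2)"
    using \<open>0 \<le> C\<close> by (subst ennreal_plus) auto
  also have "\<dots> \<le> ennreal ((1 + C) * real n ^ 2)"
    using s_less_n by (intro ennreal_leI) (simp add: distrib_right)
  finally show ?thesis
    by (simp add: C_def add.assoc)
qed

end

section \<open>The class \<open>G*\<^sub>\<epsilon>\<close>\<close>

lemma G_star_constants: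
  fixes S eps :: real
  assumes "2 \<le> S" "0 < eps" "eps < 1 / (2 * S - 1)"
  defines "A \<equiv> 1 / (2 * S - 1) - eps / (2 * S)" and "c \<equiv> (S - 1) / (2 * S - 1) + eps / 2"
  shows "0 < A" "0 < c" "(S - 1) * A < c" "c < S * A"
proof -
  define u where "u = 1 / (2 * S - 1)"
  have "0 < u" "eps < u"
    using assms(1,3) by (simp_all add: u_def)
  have A_u: "A = u - eps / (2 * S)" and c_u: "c = (S - 1) * u + eps / 2"
    by (simp_all add: A_def c_def u_def)
  have "eps / (2 * S) < eps"
    using assms(1,2) by (simp add: field_simps)
  then show "0 < A"
    using A_u \<open>eps < u\<close> by linarith
  have "0 \<le> (S - 1) * u"
    using \<open>0 < u\<close> assms(1) by simp
  then show "0 < c"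
    using c_u assms(2) by linarith
  have "c - (S - 1) * A = eps / 2 + (S - 1) * (eps / (2 * S))"
    unfolding c_u A_u by (simp add: algebra_simps)
  moreover have "0 \<le> (S - 1) * (eps / (2 * S))"
    using assms(1,2) by simp
  ultimately show "(S - 1) * A < c"
    using assms(2) by linarith
  have "S * A - c = u - eps"
    unfolding c_u A_u using assms(1) by (simp add: field_simps)
  then show "c < S * A"
    using \<open>eps < u\<close> by linarith
qed

lemma G_star_eq:
  assumes "2 \<le> s" "s < n"
  shows "G_star s eps n = (\<lambda>i. if i < s then 1 / (2 * real s - 1) - eps / (2 * real s)
    else ((real s - 1) / (2 * real s - 1) + eps / 2) / real (n - s))"
proof -
  have "2 * real s - 2 \<noteq> 0"
    using assms(1) by simp
  then have "(real s - 1) * (eps / (2 * (real s - 1))) = eps / 2"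
    by (simp add: field_simps)
  then have "(real s - 1) * (1 / (2 * real s - 1) + eps / (2 * (real s - 1)))
      = (real s - 1) / (2 * real s - 1) + eps / 2"
    by (simp add: distrib_left)
  then have "(real s - 1) / (real n - real s) * (1 / (2 * real s - 1) + eps / (2 * (real s - 1)))
      = ((real s - 1) / (2 * real s - 1) + eps / 2) / (real n - real s)"
    by (metis times_divide_eq_left)
  then show ?thesis
    using assms by (auto simp: G_star_def of_nat_diff)
qed

lemma nat_floor_mult_bounds:
  fixes xi rho :: real and m :: nat
  assumes "0 \<le> xi" "1 \<le> m * (xi - rho)"
  shows "rho * m < nat \<lfloor>xi * m\<rfloor>" "nat \<lfloor>xi * m\<rfloor> \<le> xi * m" "xi * m < nat \<lfloor>xi * m\<rfloor> + 1"
proof -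
  have "0 \<le> xi * m"
    using assms(1) by simp
  then show "nat \<lfloor>xi * m\<rfloor> \<le> xi * m" "xi * m < nat \<lfloor>xi * m\<rfloor> + 1"
    by linarith+
  then show "rho * m < nat \<lfloor>xi * m\<rfloor>"
    using assms(2) by (simp add: algebra_simps)
qed

lemma two_job_sizes_parameters_G_star:
  fixes s n k m :: nat and eps p0 A c :: real
  defines "A \<equiv> 1 / (2 * real s - 1) - eps / (2 * real s)"
    and "c \<equiv> (real s - 1) / (2 * real s - 1) + eps / 2"
    and "m \<equiv> n - s"
  assumes "even s" "2 \<le> s" "0 < eps" "eps < 1 / (2 * real s - 1)" "even n" "2 * s + 2 \<le> n"
    and k_lower: "(c - (real s - 1) * A) * real m < real k * c"
    and k_upper: "real k * c < A * real m"
    and "2 * k \<le> m"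
    and "0 < p0" "p0 \<le> A / (4 * c)" "p0 \<le> real s * Suc k / (2 ^ s * m)"
  shows "two_job_sizes_parameters s n A (c / m) (G_star s eps n) k p0"
proof -
  have "0 < A" "0 < c" "(real s - 1) * A < c"
    using G_star_constants[of "real s" eps] assms(4-7) by (simp_all add: A_def c_def)
  have "s < n" "2 \<le> m" "0 < real m" "real n \<le> 2 * real m"
    using assms(9) by (simp_all add: m_def)
  have "two_job_sizes s n A (c / m) (G_star s eps n)"
    using assms(4,8) \<open>s < n\<close> \<open>0 < A\<close> \<open>0 < c\<close> \<open>0 < real m\<close>
    by unfold_locales (simp_all add: G_star_eq[OF assms(5) \<open>s < n\<close>] A_def c_def m_def)
  moreover have "A / (4 * c) \<le> A / (2 * (c / m) * n)"
  proof -
    have "A * real n \<le> A * (2 * real m)"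
      using \<open>0 < A\<close> \<open>real n \<le> 2 * real m\<close> by (intro mult_left_mono) auto
    then have "A * real n / (4 * c * real n) \<le> A * (2 * real m) / (4 * c * real n)"
      using \<open>0 < c\<close> by (intro divide_right_mono) auto
    then show ?thesis
      using \<open>0 < c\<close> \<open>0 < real m\<close> \<open>s < n\<close> by (simp add: field_simps)
  qed
  moreover have "c - (real s - 1) * A < real k * c / m" "real k * c / m < A"
    using k_lower k_upper \<open>0 < real m\<close> by (simp_all add: less_divide_eq divide_less_eq)
  ultimately show ?thesis
    using assms(10-) \<open>(real s - 1) * A < c\<close> \<open>0 < real m\<close> \<open>2 \<le> m\<close>
    by (intro two_job_sizes_parameters.intro two_job_sizes_parameters_axioms.intro)
       (simp_all add: two_job_sizes.m_def m_def)
qed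

text \<open>The fraction \<open>xi\<close> of the small jobs that is moved together with one large job lies
  strictly between the fraction \<open>rho\<close> needed to close the gap and the fraction \<open>A / c\<close> that
  would overshoot it.\<close>
lemma G_star_fractions:
  fixes s :: nat and eps :: real
  defines "A \<equiv> 1 / (2 * real s - 1) - eps / (2 * real s)"
    and "c \<equiv> (real s - 1) / (2 * real s - 1) + eps / 2"
  assumes "2 \<le> s" "0 < eps" "eps < 1 / (2 * real s - 1)"
  obtains rho xi
  where "0 < rho" "rho < xi" "xi < 1 / 2" "xi * c < A" "c - (real s - 1) * A = rho * c"
proof -
  have "0 < A" "0 < c" "(real s - 1) * A < c" "c < real s * A"
    using G_star_constants[of "real s" eps] assms(3-5) by (simp_all add: A_def c_def)
  have "2 * A \<le> real s * A"
    using assms(3) \<open>0 < A\<close> by simp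
  then have "c < 2 * ((real s - 1) * A)"
    using \<open>c < real s * A\<close> by (simp add: algebra_simps)
  define rho where "rho = (c - (real s - 1) * A) / c"
  have "0 < rho" "rho < min (A / c) (1 / 2)"
    using \<open>0 < c\<close> \<open>(real s - 1) * A < c\<close> \<open>c < real s * A\<close> \<open>c < 2 * ((real s - 1) * A)\<close>
    by (auto simp: rho_def field_simps)
  then obtain xi where "rho < xi" "xi < A / c" "xi < 1 / 2"
    using dense by (metis min_less_iff_conj)
  moreover have "c - (real s - 1) * A = rho * c"
    using \<open>0 < c\<close> by (simp add: rho_def)
  ultimately show ?thesis
    using that \<open>0 < rho\<close> \<open>0 < c\<close> by (simp add: pos_less_divide_eq)
qed

lemma two_job_sizes_parameters_G_star_floor:
  fixes s n :: nat and eps rho xi :: real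
  defines "A \<equiv> 1 / (2 * real s - 1) - eps / (2 * real s)"
    and "c \<equiv> (real s - 1) / (2 * real s - 1) + eps / 2"
  assumes "even s" "2 \<le> s" "0 < eps" "eps < 1 / (2 * real s - 1)" "even n"
    and "0 < rho" "rho < xi" "xi < 1 / 2" "xi * c < A" "c - (real s - 1) * A = rho * c"
    and "2 * s + 2 + nat \<lceil>1 / (xi - rho)\<rceil> \<le> n"
  shows "two_job_sizes_parameters s n A (c / (n - s)) (G_star s eps n) (nat \<lfloor>xi * (n - s)\<rfloor>)
    (min (A / (4 * c)) (real s * xi / 2 ^ s))"
proof -
  define m where "m = n - s"
  define k where "k = nat \<lfloor>xi * m\<rfloor>"
  define p0 where "p0 = min (A / (4 * c)) (real s * xi / 2 ^ s)"
  have "0 < A" "0 < c"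
    using G_star_constants[of "real s" eps] assms(4-6) by (simp_all add: A_def c_def)
  have "2 * s + 2 \<le> n" "real (nat \<lceil>1 / (xi - rho)\<rceil>) \<le> real m"
    using assms(13) by (simp_all add: m_def)
  then have "1 / (xi - rho) \<le> real m" "0 < real m"
    using real_nat_ceiling_ge[of "1 / (xi - rho)"] by (simp_all add: m_def)
  then have "1 \<le> real m * (xi - rho)"
    using \<open>rho < xi\<close> by (simp add: divide_le_eq mult.commute)
  then have k: "rho * m < k" "k \<le> xi * m" "xi * m < k + 1"
    using nat_floor_mult_bounds[of xi m rho] \<open>0 < rho\<close> \<open>rho < xi\<close> by (simp_all add: k_def)
  have k_lower: "(c - (real s - 1) * A) * m < real k * c"
    using mult_strict_right_mono[OF k(1) \<open>0 < c\<close>] \<open>c - (real s - 1) * A = rho * c\<close>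
    by (simp add: algebra_simps)
  have k_upper: "real k * c < A * m"
    using mult_right_mono[OF k(2) less_imp_le[OF \<open>0 < c\<close>]]
      mult_strict_right_mono[OF \<open>xi * c < A\<close> \<open>0 < real m\<close>] by (simp add: algebra_simps)
  have "2 * k \<le> m"
    using k(2) \<open>xi < 1 / 2\<close> \<open>0 < real m\<close> mult_strict_right_mono[of xi "1 / 2" "real m"] by linarith
  have "0 < p0" "p0 \<le> A / (4 * c)"
    using \<open>0 < A\<close> \<open>0 < c\<close> \<open>0 < rho\<close> \<open>rho < xi\<close> assms(4) by (simp_all add: p0_def)
  have "p0 \<le> real s * xi / 2 ^ s"
    by (simp add: p0_def)
  also have "\<dots> = real s * (xi * m) / (2 ^ s * m)"
    using \<open>0 < real m\<close> by simp
  also have "\<dots> \<le> real s * Suc k / (2 ^ s * m)"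
    using k(3) \<open>0 < real m\<close> by (intro divide_right_mono mult_left_mono) auto
  finally have "p0 \<le> real s * Suc k / (2 ^ s * m)" .
  with two_job_sizes_parameters_G_star[OF assms(3-7) \<open>2 * s + 2 \<le> n\<close>, folded A_def c_def m_def,
      OF k_lower k_upper \<open>2 * k \<le> m\<close> \<open>0 < p0\<close> \<open>p0 \<le> A / (4 * c)\<close>]
  show ?thesis
    unfolding m_def k_def p0_def .
qed

lemma G_star_parameters:
  assumes "even s" "2 \<le> s" "0 < eps" "eps < 1 / (2 * real s - 1)"
  obtains p0 N where
    "\<And>n. N \<le> n \<Longrightarrow> even n \<Longrightarrow> \<exists>A B k. two_job_sizes_parameters s n A B (G_star s eps n) k p0"
proof -
  obtain rho xi where rho_xi: "0 < rho" "rho < xi" "xi < 1 / 2"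
    "xi * ((real s - 1) / (2 * real s - 1) + eps / 2) < 1 / (2 * real s - 1) - eps / (2 * real s)"
    "(real s - 1) / (2 * real s - 1) + eps / 2
        - (real s - 1) * (1 / (2 * real s - 1) - eps / (2 * real s))
      = rho * ((real s - 1) / (2 * real s - 1) + eps / 2)"
    using G_star_fractions[OF assms(2-4)] by blast
  show ?thesis
    by (rule that) (use two_job_sizes_parameters_G_star_floor[OF assms _ rho_xi] in blast)
qed

theorem theorem4:
  fixes s :: nat and eps :: real
  assumes "even s" and "s \<ge> 2"
    and "0 < eps" and "eps < 1 / (2 * real s - 1)"
  shows "\<exists>C N. \<forall>n \<ge> N. even n \<longrightarrow>
           expected_runtime (G_star s eps n) n \<le> ennreal (C * real n ^ 2)"
proof -
  obtain p0 N where parameters: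
    "\<And>n. N \<le> n \<Longrightarrow> even n \<Longrightarrow> \<exists>A B k. two_job_sizes_parameters s n A B (G_star s eps n) k p0"
    using G_star_parameters[OF assms] by blast
  show ?thesis
  proof (intro exI allI impI)
    fix n
    assume "N \<le> n" "even n"
    then obtain A B k where "two_job_sizes_parameters s n A B (G_star s eps n) k p0"
      using parameters by blast
    then show "expected_runtime (G_star s eps n) n
        \<le> ennreal ((1 + 2 * (s + 1) / p0 + 4 * (s + 1) * 2 ^ s) * real n ^ 2)"
      by (rule two_job_sizes_parameters.expected_runtime_le)
  qed
qed

end
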